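(* Let $p(bc\mid yz)$ be a bipartite conditional probability distribution with binary settings $y,z\in\{0,1\}$ and binary outcomes $b,c\in\{0,1\}$ which is nonsignalling, i.e. $\sum_c p(bc\mid yz)$ does not depend on $z$ and $\sum_b p(bc\mid yz)$ does not depend on $y$. Then $$\frac14\sum_{y,z\in\{0,1\}} p(b\oplus c = yz\mid yz) \;\leq\; \frac54 - \frac12\, p(b=0\mid y=0),$$ where $p(b=0\mid y=0)=\sum_c p(b=0,c\mid y=0,z)$ (independent of $z$ by nonsignalling).
   Context: $\oplus$ denotes addition modulo 2, and $p(b\oplus c = yz\mid yz)=\sum_{b,c:\, b\oplus c = yz} p(bc\mid yz)$. *)

theory Defs
  imports Complex_Main
begin

text \<open>A bipartite conditional probability distribution p(bc|yz) with
binary settings y,z and binary outcomes b,c, all encoded in {0,1} :: nat.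
p b c y z stands for p(bc|yz).\<close>

definition is_cond_prob :: "(nat \<Rightarrow> nat \<Rightarrow> nat \<Rightarrow> nat \<Rightarrow> real) \<Rightarrow> bool" where
  "is_cond_prob p \<longleftrightarrow>
     (\<forall>b\<in>{0,1}. \<forall>c\<in>{0,1}. \<forall>y\<in>{0,1}. \<forall>z\<in>{0,1}. p b c y z \<ge> 0) \<and>
     (\<forall>y\<in>{0,1}. \<forall>z\<in>{0,1}. (\<Sum>b\<in>{0,1}. \<Sum>c\<in>{0,1}. p b c y z) = 1)"

definition nonsignalling :: "(nat \<Rightarrow> nat \<Rightarrow> nat \<Rightarrow> nat \<Rightarrow> real) \<Rightarrow> bool" where
  "nonsignalling p \<longleftrightarrow>
     (\<forall>b\<in>{0,1}. \<forall>y\<in>{0,1}. \<forall>z\<in>{0,1}. \<forall>z'\<in>{0,1}.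
        (\<Sum>c\<in>{0,1}. p b c y z) = (\<Sum>c\<in>{0,1}. p b c y z')) \<and>
     (\<forall>c\<in>{0,1}. \<forall>z\<in>{0,1}. \<forall>y\<in>{0,1}. \<forall>y'\<in>{0,1}.
        (\<Sum>b\<in>{0,1}. p b c y z) = (\<Sum>b\<in>{0,1}. p b c y' z))"

definition win_prob :: "(nat \<Rightarrow> nat \<Rightarrow> nat \<Rightarrow> nat \<Rightarrow> real) \<Rightarrow> nat \<Rightarrow> nat \<Rightarrow> real" where
  "win_prob p y z = (\<Sum>b\<in>{0,1}. \<Sum>c\<in>{0,1}. if (b + c) mod 2 = y * z then p b c y z else 0)"

text \<open>Marginal p(b=0|y=0) = \<Sum>_c p(0c|0z); taken at z = 0 (independent of z by nonsignalling).\<close>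
definition marg_b0_y0 :: "(nat \<Rightarrow> nat \<Rightarrow> nat \<Rightarrow> nat \<Rightarrow> real) \<Rightarrow> real" where
  "marg_b0_y0 p = (\<Sum>c\<in>{0,1}. p 0 c 0 0)"

end

theory Submission
  imports Defs
begin

text \<open>Write \<open>B\<^sub>y\<close> and \<open>C\<^sub>z\<close> for the nonsignalling marginals \<open>p(b=0|y)\<close> and
\<open>p(c=0|z)\<close>. For a single 2x2 probability table, the outcomes can agree with probability at
most \<open>1 - |p(b=0) - p(c=0)|\<close> and disagree with probability at most \<open>p(b=1) + p(c=1)\<close>.
Hence the winning probabilities of the four setting pairs are bounded by \<open>1 - B\<^sub>0 + C\<^sub>0\<close>,
\<open>1 - B\<^sub>0 + C\<^sub>1\<close>, \<open>1 - C\<^sub>0 + B\<^sub>1\<close> and \<open>2 - B\<^sub>1 - C\<^sub>1\<close>; everything except \<open>B\<^sub>0\<close>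
cancels in the sum, which is therefore at most \<open>5 - 2 B\<^sub>0\<close>.\<close>

definition prob_table :: "(nat \<Rightarrow> nat \<Rightarrow> real) \<Rightarrow> bool" where
  "prob_table q \<longleftrightarrow>
     (\<forall>b\<in>{0,1}. \<forall>c\<in>{0,1}. q b c \<ge> 0) \<and> (\<Sum>b\<in>{0,1}. \<Sum>c\<in>{0,1}. q b c) = 1"

lemma is_cond_prob_iff_prob_tables:
  "is_cond_prob p \<longleftrightarrow> (\<forall>y\<in>{0,1}. \<forall>z\<in>{0,1}. prob_table (\<lambda>b c. p b c y z))"
  unfolding is_cond_prob_def prob_table_def by blast

lemma prob_table_agree_le:
  assumes "prob_table q"
  shows "q 0 0 + q 1 1 \<le> 1 - \<bar>(\<Sum>c\<in>{0,1}. q 0 c) - (\<Sum>b\<in>{0,1}. q b 0)\<bar>"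
  using assms unfolding prob_table_def by (simp add: abs_if)

lemma prob_table_disagree_le:
  assumes "prob_table q"
  shows "q 0 1 + q 1 0 \<le> 2 - (\<Sum>c\<in>{0,1}. q 0 c) - (\<Sum>b\<in>{0,1}. q b 0)"
  using assms unfolding prob_table_def by simp

theorem lemma1:
  fixes p :: "nat \<Rightarrow> nat \<Rightarrow> nat \<Rightarrow> nat \<Rightarrow> real"
  assumes "is_cond_prob p"
    and "nonsignalling p"
  shows "(1/4) * (\<Sum>y\<in>{0,1}. \<Sum>z\<in>{0,1}. win_prob p y z) \<le> 5/4 - (1/2) * marg_b0_y0 p"
proof -
  define B where "B y z = (\<Sum>c\<in>{0,1}. p 0 c y z)" for y z
  define C where "C y z = (\<Sum>b\<in>{0,1}. p b 0 y z)" for y z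
  have tables: "prob_table (\<lambda>b c. p b c y z)" if "y \<in> {0,1}" "z \<in> {0,1}" for y z
    using assms(1) that unfolding is_cond_prob_iff_prob_tables by blast
  have agree: "p 0 0 y z + p 1 1 y z \<le> 1 - \<bar>B y z - C y z\<bar>" if "y \<in> {0,1}" "z \<in> {0,1}" for y z
    using prob_table_agree_le[OF tables[OF that]] by (simp add: B_def C_def)
  have disagree: "p 0 1 1 1 + p 1 0 1 1 \<le> 2 - B 1 1 - C 1 1"
    using prob_table_disagree_le[OF tables] by (simp add: B_def C_def)
  have B_indep: "B y 1 = B y 0" if "y \<in> {0,1}" for y
    using assms(2) that unfolding nonsignalling_def B_def by blast
  have C_indep: "C 1 z = C 0 z" if "z \<in> {0,1}" for z
    using assms(2) that unfolding nonsignalling_def C_def by blast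
  have "(\<Sum>y\<in>{0,1}. \<Sum>z\<in>{0,1}. win_prob p y z) =
      (p 0 0 0 0 + p 1 1 0 0) + (p 0 0 0 1 + p 1 1 0 1) + (p 0 0 1 0 + p 1 1 1 0)
      + (p 0 1 1 1 + p 1 0 1 1)"
    by (simp add: win_prob_def)
  also have "\<dots> \<le> (1 - B 0 0 + C 0 0) + (1 - B 0 0 + C 0 1) + (1 - C 0 0 + B 1 0)
      + (2 - B 1 0 - C 0 1)"
    using agree[of 0 0] agree[of 0 1] agree[of 1 0] disagree B_indep C_indep
    by (simp add: abs_le_iff)
  also have "\<dots> = 5 - 2 * marg_b0_y0 p"
    by (simp add: marg_b0_y0_def B_def)
  finally show ?thesis
    by simp
qed

end
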